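(* Let $k$ be a field of characteristic $0$ or greater than $d$, $d\ge3$, and $(V,\Theta)$ a regular $d$-linear space over $k$ with center $\mathrm{Cent}_k(\Theta)$ and Lie algebra $\mathcal{L}_\Theta$. Let $\psi\in\mathrm{Cent}_k(\Theta)$. Then $[f,g]_\psi:=f\psi g-g\psi f$ defines a Lie algebra structure on the vector space $\mathcal{L}_\Theta$ (in particular $[f,g]_\psi\in\mathcal{L}_\Theta$ for all $f,g\in\mathcal{L}_\Theta$).
   Context: $(V,\Theta)$: $V$ finite-dimensional $k$-space, $\Theta:V^d\to k$ symmetric $d$-linear, regular meaning $\Theta(w,u_2,\dots,u_d)=0\ \forall u_i\Rightarrow w=0$. $\mathrm{Cent}_k(\Theta)=\{f\in\mathrm{End}_k(V):\Theta(fu_1,u_2,\dots,u_d)=\Theta(u_1,fu_2,\dots,u_d)\ \forall u_i\}$. $\mathcal{L}_\Theta=\{L\in\mathfrak{gl}(V):\sum_{i=1}^d\Theta(u_1,\dots,L(u_i),\dots,u_d)=0\ \forall u_i\}$. *)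

theory Defs
  imports Complex_Main "HOL-Combinatorics.Permutations"
begin

text \<open>A d-linear form on V is modelled as a function Theta :: (nat => 'v) => 'a
  taking a d-tuple (u 0, ..., u (d-1)) encoded as a function on indices;
  only the entries with index < d matter.\<close>

definition dlinear_form ::
  "('a::field \<Rightarrow> 'v::ab_group_add \<Rightarrow> 'v) \<Rightarrow> nat \<Rightarrow> ((nat \<Rightarrow> 'v) \<Rightarrow> 'a) \<Rightarrow> bool" where
  "dlinear_form scale d Theta \<longleftrightarrow>
     (\<forall>u u'. (\<forall>i<d. u i = u' i) \<longrightarrow> Theta u = Theta u') \<and>
     (\<forall>u i. i < d \<longrightarrow>
        (\<forall>x y. Theta (u(i := x + y)) = Theta (u(i := x)) + Theta (u(i := y))) \<and>
        (\<forall>c x. Theta (u(i := scale c x)) = c * Theta (u(i := x))))"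

definition symmetric_form :: "nat \<Rightarrow> ((nat \<Rightarrow> 'v) \<Rightarrow> 'a) \<Rightarrow> bool" where
  "symmetric_form d Theta \<longleftrightarrow> (\<forall>u p. p permutes {..<d} \<longrightarrow> Theta (u \<circ> p) = Theta u)"

definition regular_form :: "((nat \<Rightarrow> 'v::zero) \<Rightarrow> 'a::zero) \<Rightarrow> bool" where
  "regular_form Theta \<longleftrightarrow> (\<forall>w. (\<forall>u. Theta (u(0 := w)) = 0) \<longrightarrow> w = 0)"

definition Cent ::
  "('a::field \<Rightarrow> 'v::ab_group_add \<Rightarrow> 'v) \<Rightarrow> ((nat \<Rightarrow> 'v) \<Rightarrow> 'a) \<Rightarrow> ('v \<Rightarrow> 'v) set" where
  "Cent scale Theta = {f. Vector_Spaces.linear scale scale f \<and>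
     (\<forall>u. Theta (u(0 := f (u 0))) = Theta (u(1 := f (u 1))))}"

definition LieAlg ::
  "('a::field \<Rightarrow> 'v::ab_group_add \<Rightarrow> 'v) \<Rightarrow> nat \<Rightarrow> ((nat \<Rightarrow> 'v) \<Rightarrow> 'a) \<Rightarrow> ('v \<Rightarrow> 'v) set" where
  "LieAlg scale d Theta = {L. Vector_Spaces.linear scale scale L \<and>
     (\<forall>u. (\<Sum>i<d. Theta (u(i := L (u i)))) = 0)}"

definition psi_bracket :: "('v::ab_group_add \<Rightarrow> 'v) \<Rightarrow> ('v \<Rightarrow> 'v) \<Rightarrow> ('v \<Rightarrow> 'v) \<Rightarrow> 'v \<Rightarrow> 'v" where
  "psi_bracket psi f g = (\<lambda>x. f (psi (g x)) - g (psi (f x)))"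

definition end_add :: "('v::ab_group_add \<Rightarrow> 'v) \<Rightarrow> ('v \<Rightarrow> 'v) \<Rightarrow> 'v \<Rightarrow> 'v" where
  "end_add f g = (\<lambda>x. f x + g x)"

definition end_scale :: "('a \<Rightarrow> 'v \<Rightarrow> 'v) \<Rightarrow> 'a \<Rightarrow> ('v \<Rightarrow> 'v) \<Rightarrow> 'v \<Rightarrow> 'v" where
  "end_scale scale c f = (\<lambda>x. scale c (f x))"

end

theory Submission
  imports Defs
begin

text \<open>With \<open>f \<star> g = f \<circ> \<psi> \<circ> g\<close>, the bracket \<open>[f, g]\<^sub>\<psi>\<close> is the commutator of an
  associative product, so bilinearity, the alternating law and the Jacobi identity are formal.
  The content is closure. If \<open>f \<in> L\<^sub>\<Theta>\<close>, moving \<open>f\<close> off slot \<open>i\<close> gives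
  \<open>\<Theta>(\<dots>, f\<psi>g u\<^sub>i, \<dots>) = - \<Sum>\<^bsub>j \<noteq> i\<^esub> \<Theta>(\<dots>, \<psi>g u\<^sub>i, \<dots>, f u\<^sub>j, \<dots>)\<close>. As \<open>\<psi>\<close> is central
  and \<open>\<Theta>\<close> symmetric, \<open>\<psi>\<close> may be shifted from slot \<open>i\<close> to slot \<open>j\<close>; exchanging the roles
  of \<open>i\<close> and \<open>j\<close> in the double sum and moving \<open>g\<close> back onto slot \<open>j\<close> then yields
  \<open>\<Sum>\<^sub>j \<Theta>(\<dots>, g\<psi>f u\<^sub>j, \<dots>)\<close>.\<close>

definition annihilates_form :: "nat \<Rightarrow> ((nat \<Rightarrow> 'v) \<Rightarrow> 'a::ab_group_add) \<Rightarrow> ('v \<Rightarrow> 'v) \<Rightarrow> bool"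
  where "annihilates_form d Theta L \<longleftrightarrow> (\<forall>u. (\<Sum>i<d. Theta (u(i := L (u i)))) = 0)"

lemma LieAlg_iff:
  "L \<in> LieAlg scale d Theta \<longleftrightarrow> Vector_Spaces.linear scale scale L \<and> annihilates_form d Theta L"
  by (simp add: LieAlg_def annihilates_form_def)

lemma dlinear_form_diff:
  assumes "dlinear_form scale d Theta" "i < d"
  shows "Theta (u(i := x - y)) = Theta (u(i := x)) - Theta (u(i := y))"
proof -
  have "Theta (u(i := (x - y) + y)) = Theta (u(i := x - y)) + Theta (u(i := y))"
    using assms unfolding dlinear_form_def by blast
  then show ?thesis by simp
qed

lemma sum_off_diagonal_swap:
  fixes F :: "nat \<Rightarrow> nat \<Rightarrow> 'a::comm_monoid_add"
  shows "(\<Sum>i<n. \<Sum>j\<in>{..<n} - {i}. F i j) = (\<Sum>i<n. \<Sum>j\<in>{..<n} - {i}. F j i)"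
proof -
  have "(\<Sum>i<n. \<Sum>j\<in>{..<n} - {i}. F i j) = (\<Sum>i<n. \<Sum>j\<in>{j\<in>{..<n}. j \<noteq> i}. F i j)"
    by (intro sum.cong) auto
  also have "\<dots> = (\<Sum>j<n. \<Sum>i\<in>{i\<in>{..<n}. j \<noteq> i}. F i j)"
    by (rule sum.swap_restrict) auto
  also have "\<dots> = (\<Sum>j<n. \<Sum>i\<in>{..<n} - {j}. F i j)"
    by (intro sum.cong) auto
  finally show ?thesis .
qed

text \<open>A permutation sending slots \<open>0, 1\<close> to \<open>i, j\<close> transports the defining identity of
  the centre to the slots \<open>i, j\<close>.\<close>

lemma Cent_exchange_slots:
  assumes sym: "symmetric_form d Theta" and psi: "psi \<in> Cent scale Theta"
    and ij: "i < d" "j < d" "i \<noteq> j"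
  shows "Theta (u(i := psi x, j := y)) = Theta (u(i := x, j := psi y))"
proof -
  define p where "p = transpose 0 i \<circ> transpose 1 (transpose 0 i j)"
  have p: "p permutes {..<d}"
    unfolding p_def using ij by (intro permutes_compose permutes_swap_id) (auto simp: transpose_def)
  have p0: "p 0 = i" and p1: "p 1 = j"
    using ij by (auto simp: p_def transpose_def)
  have "inj p" using p permutes_inj by blast
  define w where "w = u(i := x, j := y)"
  have slot_i: "(w \<circ> p)(0 := psi ((w \<circ> p) 0)) = w(i := psi (w i)) \<circ> p"
    and slot_j: "(w \<circ> p)(1 := psi ((w \<circ> p) 1)) = w(j := psi (w j)) \<circ> p"
    using p0 p1 \<open>inj p\<close> by (auto simp: fun_eq_iff inj_eq)
  have "Theta (w(i := psi (w i))) = Theta (w(i := psi (w i)) \<circ> p)"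
    using sym p unfolding symmetric_form_def by metis
  also have "\<dots> = Theta (w(j := psi (w j)) \<circ> p)"
  proof -
    have "Theta ((w \<circ> p)(0 := psi ((w \<circ> p) 0))) = Theta ((w \<circ> p)(1 := psi ((w \<circ> p) 1)))"
      using psi unfolding Cent_def by blast
    then show ?thesis by (simp only: slot_i slot_j)
  qed
  also have "\<dots> = Theta (w(j := psi (w j)))"
    using sym p unfolding symmetric_form_def by metis
  finally show ?thesis
    using ij by (simp add: w_def fun_upd_twist)
qed

lemma annihilates_form_slot_expand:
  assumes L: "annihilates_form d Theta L" and i: "i < d"
  shows "Theta (u(i := L y)) = - (\<Sum>j\<in>{..<d} - {i}. Theta (u(i := y, j := L (u j))))"
proof -
  define w where "w = u(i := y)"
  have "0 = (\<Sum>j<d. Theta (w(j := L (w j))))"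
    using L unfolding annihilates_form_def by simp
  also have "\<dots> = Theta (w(i := L (w i))) + (\<Sum>j\<in>{..<d} - {i}. Theta (w(j := L (w j))))"
    using i by (simp add: sum.remove)
  also have "(\<Sum>j\<in>{..<d} - {i}. Theta (w(j := L (w j))))
      = (\<Sum>j\<in>{..<d} - {i}. Theta (u(i := y, j := L (u j))))"
    by (intro sum.cong) (auto simp: w_def)
  also have "w(i := L (w i)) = u(i := L y)"
    by (simp add: w_def)
  finally show ?thesis
    by (metis eq_neg_iff_add_eq_0)
qed

lemma annihilates_form_psi_bracket:
  fixes Theta :: "(nat \<Rightarrow> 'v::ab_group_add) \<Rightarrow> 'a::field"
  assumes Theta: "dlinear_form scale d Theta" "symmetric_form d Theta"
    and psi: "psi \<in> Cent scale Theta"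
    and f: "annihilates_form d Theta f" and g: "annihilates_form d Theta g"
  shows "annihilates_form d Theta (psi_bracket psi f g)"
  unfolding annihilates_form_def
proof
  fix u
  let ?off = "\<lambda>i. {..<d} - {i}"
  have "(\<Sum>i<d. Theta (u(i := f (psi (g (u i))))))
      = - (\<Sum>i<d. \<Sum>j\<in>?off i. Theta (u(i := psi (g (u i)), j := f (u j))))"
    by (simp add: annihilates_form_slot_expand[OF f] sum_negf)
  also have "\<dots> = - (\<Sum>i<d. \<Sum>j\<in>?off i. Theta (u(i := g (u i), j := psi (f (u j)))))"
    using Cent_exchange_slots[OF Theta(2) psi] by (intro arg_cong[of _ _ uminus] sum.cong) auto
  also have "\<dots> = - (\<Sum>j<d. \<Sum>i\<in>?off j. Theta (u(j := psi (f (u j)), i := g (u i))))"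
    by (subst sum_off_diagonal_swap) (intro arg_cong[of _ _ uminus] sum.cong refl; auto simp: fun_upd_twist)
  also have "\<dots> = (\<Sum>j<d. Theta (u(j := g (psi (f (u j))))))"
    by (simp add: annihilates_form_slot_expand[OF g] sum_negf)
  finally show "(\<Sum>i<d. Theta (u(i := psi_bracket psi f g (u i)))) = 0"
    by (simp add: psi_bracket_def dlinear_form_diff[OF Theta(1)] sum_subtractf)
qed

lemma linear_psi_bracket:
  assumes "Vector_Spaces.linear scale scale psi"
    and "Vector_Spaces.linear scale scale f" "Vector_Spaces.linear scale scale g"
  shows "Vector_Spaces.linear scale scale (psi_bracket psi f g)"
proof -
  interpret vector_space_pair scale scale
    using assms(1) by (simp add: vector_space_pair_def Vector_Spaces.linear_iff)
  have "Vector_Spaces.linear scale scale (\<lambda>x. (f \<circ> psi \<circ> g) x - (g \<circ> psi \<circ> f) x)"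
    using assms by (intro linear_compose_sub Vector_Spaces.linear_compose)
  then show ?thesis
    by (simp add: psi_bracket_def)
qed

lemma psi_bracket_in_LieAlg:
  assumes Theta: "dlinear_form scale d Theta" "symmetric_form d Theta"
    and psi: "psi \<in> Cent scale Theta"
    and "f \<in> LieAlg scale d Theta" "g \<in> LieAlg scale d Theta"
  shows "psi_bracket psi f g \<in> LieAlg scale d Theta"
  using assms annihilates_form_psi_bracket[OF Theta psi] linear_psi_bracket
  by (auto simp: LieAlg_iff Cent_def)

lemma psi_bracket_linear_left:
  assumes "Vector_Spaces.linear scale scale psi" "Vector_Spaces.linear scale scale h"
  shows "psi_bracket psi (end_add (end_scale scale a f) (end_scale scale b g)) h
    = end_add (end_scale scale a (psi_bracket psi f h)) (end_scale scale b (psi_bracket psi g h))"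
proof -
  interpret vector_space_pair scale scale
    using assms(1) by (simp add: vector_space_pair_def Vector_Spaces.linear_iff)
  show ?thesis
    using assms by (simp add: psi_bracket_def end_add_def end_scale_def linear_add linear_scale
        vs1.scale_right_diff_distrib algebra_simps)
qed

lemma psi_bracket_linear_right:
  assumes "Vector_Spaces.linear scale scale psi" "Vector_Spaces.linear scale scale h"
  shows "psi_bracket psi h (end_add (end_scale scale a f) (end_scale scale b g))
    = end_add (end_scale scale a (psi_bracket psi h f)) (end_scale scale b (psi_bracket psi h g))"
proof -
  interpret vector_space_pair scale scale
    using assms(1) by (simp add: vector_space_pair_def Vector_Spaces.linear_iff)
  show ?thesis
    using assms by (simp add: psi_bracket_def end_add_def end_scale_def linear_add linear_scale
        vs1.scale_right_diff_distrib algebra_simps)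
qed

lemma psi_bracket_self: "psi_bracket psi f f = (\<lambda>x. 0)"
  by (simp add: psi_bracket_def)

lemma linear_imp_additive: "Vector_Spaces.linear s1 s2 f \<Longrightarrow> additive f"
  by (simp add: additive_def Vector_Spaces.linear_iff)

lemma psi_bracket_jacobi:
  assumes "additive psi" "additive f" "additive g" "additive h"
  shows "end_add (end_add (psi_bracket psi f (psi_bracket psi g h))
                          (psi_bracket psi g (psi_bracket psi h f)))
                 (psi_bracket psi h (psi_bracket psi f g)) = (\<lambda>x. 0)"
  using assms by (simp add: psi_bracket_def end_add_def fun_eq_iff additive.diff algebra_simps)

theorem proposition2p15:
  fixes scale :: "'a::field \<Rightarrow> 'v::ab_group_add \<Rightarrow> 'v"
    and Basis :: "'v set"
    and d :: nat
    and Theta :: "(nat \<Rightarrow> 'v) \<Rightarrow> 'a"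
    and psi :: "'v \<Rightarrow> 'v"
  assumes fdvs: "finite_dimensional_vector_space scale Basis"
    and char: "CHAR('a) = 0 \<or> CHAR('a) > d"
    and d3: "d \<ge> 3"
    and mult: "dlinear_form scale d Theta"
    and sym: "symmetric_form d Theta"
    and reg: "regular_form Theta"
    and psi: "psi \<in> Cent scale Theta"
  shows "(\<forall>f\<in>LieAlg scale d Theta. \<forall>g\<in>LieAlg scale d Theta.
            psi_bracket psi f g \<in> LieAlg scale d Theta)
       \<and> (\<forall>f\<in>LieAlg scale d Theta. \<forall>g\<in>LieAlg scale d Theta. \<forall>h\<in>LieAlg scale d Theta. \<forall>a b.
            psi_bracket psi (end_add (end_scale scale a f) (end_scale scale b g)) h
              = end_add (end_scale scale a (psi_bracket psi f h)) (end_scale scale b (psi_bracket psi g h))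
          \<and> psi_bracket psi h (end_add (end_scale scale a f) (end_scale scale b g))
              = end_add (end_scale scale a (psi_bracket psi h f)) (end_scale scale b (psi_bracket psi h g)))
       \<and> (\<forall>f\<in>LieAlg scale d Theta. psi_bracket psi f f = (\<lambda>x. 0))
       \<and> (\<forall>f\<in>LieAlg scale d Theta. \<forall>g\<in>LieAlg scale d Theta. \<forall>h\<in>LieAlg scale d Theta.
            end_add (end_add (psi_bracket psi f (psi_bracket psi g h))
                             (psi_bracket psi g (psi_bracket psi h f)))
                    (psi_bracket psi h (psi_bracket psi f g)) = (\<lambda>x. 0))"
proof -
  have psi_linear: "Vector_Spaces.linear scale scale psi"
    using psi by (simp add: Cent_def)
  have linear: "Vector_Spaces.linear scale scale f" if "f \<in> LieAlg scale d Theta" for f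
    using that by (simp add: LieAlg_iff)
  show ?thesis
    by (intro conjI ballI allI psi_bracket_in_LieAlg[OF mult sym psi] psi_bracket_self
        psi_bracket_linear_left[OF psi_linear linear] psi_bracket_linear_right[OF psi_linear linear]
        psi_bracket_jacobi linear_imp_additive[OF psi_linear] linear_imp_additive[OF linear])
qed

end
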